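(* Let $G$ and $H$ be countable groups and let $\mathfrak{w}$ be an absolutely generating probability measure on $G$. Let $(X,\mu)$ be a standard probability space, let $(\mathsf{A},\mathsf{B})$ be an ergodic p.m.p. action of $G\times H$ on $(X,\mu)$, and let $D$ be a $\mathsf{B}$-invariant measurable set. Then for every $p\in[1,\infty)$, \[\lim_{n\to\infty}\|\mu(D)-\mathsf{A}(\mathfrak{w}^{\ast n})\mathbf{1}_D\|_p=0.\]
   Context: A p.m.p. action of $G\times H$ is a commuting pair $(\mathsf{A},\mathsf{B})$ of p.m.p. actions of $G$ and $H$; it is ergodic if every set invariant under both has measure $0$ or $1$. $D$ is $\mathsf{B}$-invariant if $\mu(\mathsf{B}^hD\triangle D)=0$ for all $h\in H$. A probability measure $\mathfrak{w}$ on $G$ is absolutely generating if it is symmetric ($\mathfrak{w}(g)=\mathfrak{w}(g^{-1})$) and the support of $\mathfrak{w}\ast\mathfrak{w}$ generates $G$; $\mathfrak{w}^{\ast n}$ denotes the $n$-fold convolution power. $[\mathsf{A}(\mathfrak{w})\psi](x)=\sum_{g\in G}\mathfrak{w}(g)\psi(\mathsf{A}^gx)$; $\mu(D)$ is regarded as a constant function; $\mathbf{1}_D$ is the indicator function. *)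

theory Defs
  imports "HOL-Probability.Probability"
begin

text \<open>Groups are written additively (class group_add, not necessarily commutative).\<close>

inductive_set gen_subgroup :: "'g::group_add set \<Rightarrow> 'g set" for S where
  gen_base: "s \<in> S \<Longrightarrow> s \<in> gen_subgroup S"
| gen_zero: "0 \<in> gen_subgroup S"
| gen_add: "a \<in> gen_subgroup S \<Longrightarrow> b \<in> gen_subgroup S \<Longrightarrow> a + b \<in> gen_subgroup S"
| gen_uminus: "a \<in> gen_subgroup S \<Longrightarrow> - a \<in> gen_subgroup S"

definition conv_pmf :: "'g::group_add pmf \<Rightarrow> 'g pmf \<Rightarrow> 'g pmf" where
  "conv_pmf v w = map_pmf (\<lambda>(a, b). a + b) (pair_pmf v w)"

fun conv_pow :: "'g::group_add pmf \<Rightarrow> nat \<Rightarrow> 'g pmf" where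
  "conv_pow w 0 = return_pmf 0"
| "conv_pow w (Suc n) = conv_pmf (conv_pow w n) w"

definition absolutely_generating :: "'g::group_add pmf \<Rightarrow> bool" where
  "absolutely_generating w \<longleftrightarrow>
     (\<forall>g. pmf w g = pmf w (- g)) \<and> gen_subgroup (set_pmf (conv_pmf w w)) = UNIV"

definition pmp_action :: "'x measure \<Rightarrow> ('g::group_add \<Rightarrow> 'x \<Rightarrow> 'x) \<Rightarrow> bool" where
  "pmp_action M A \<longleftrightarrow> (\<forall>g. A g \<in> measurable M M \<and> distr M M (A g) = M) \<and> A 0 = id \<and>
     (\<forall>g h. A (g + h) = A g \<circ> A h)"

definition ae_invariant :: "'x measure \<Rightarrow> ('g \<Rightarrow> 'x \<Rightarrow> 'x) \<Rightarrow> 'x set \<Rightarrow> bool" where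
  "ae_invariant M A S \<longleftrightarrow> (\<forall>g. measure M ((A g ` S - S) \<union> (S - A g ` S)) = 0)"

definition ergodic_pair :: "'x measure \<Rightarrow> ('g \<Rightarrow> 'x \<Rightarrow> 'x) \<Rightarrow> ('h \<Rightarrow> 'x \<Rightarrow> 'x) \<Rightarrow> bool" where
  "ergodic_pair M A B \<longleftrightarrow> (\<forall>S \<in> sets M. ae_invariant M A S \<and> ae_invariant M B S \<longrightarrow>
     measure M S = 0 \<or> measure M S = 1)"

definition action_op :: "('g \<Rightarrow> 'x \<Rightarrow> 'x) \<Rightarrow> 'g pmf \<Rightarrow> ('x \<Rightarrow> real) \<Rightarrow> 'x \<Rightarrow> real" where
  "action_op A v \<psi> x = (\<Sum>\<^sub>\<infinity>g. pmf v g * \<psi> (A g x))"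

end

theory Submission
  imports Defs
begin

text \<open>
  Write \<open>P = A(w)\<close> and \<open>f = 1_D - \<mu>(D)\<close>. Symmetry of \<open>w\<close> makes \<open>P\<close> self-adjoint on L2, so
  \<open>a(n) = \<parallel>P^n f\<parallel>\<^sup>2\<close> is non-increasing (Jensen) and \<open>\<langle>P^i f, P^j f\<rangle>\<close> depends only on \<open>i + j\<close>.
  Hence \<open>\<parallel>P^2n f - P^2m f\<parallel>\<^sup>2 = a(2n) + a(2m) - 2 a(n + m)\<close> tends to 0, and a subsequence of the
  even steps converges almost everywhere to some \<open>g\<close>. The energy identity
  \<open>E_{s ~ w*w} \<parallel>h \<circ> A^s - h\<parallel>\<^sup>2 = 2 \<parallel>h\<parallel>\<^sup>2 - 2 \<parallel>P h\<parallel>\<^sup>2\<close> for \<open>h = P^2n f\<close> shows that \<open>g\<close> is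
  \<open>A^s\<close>-invariant for \<open>s\<close> in the support of \<open>w * w\<close>, hence for all \<open>s \<in> G\<close>, and \<open>g\<close> inherits
  \<open>B\<close>-invariance from \<open>f\<close>. By ergodicity \<open>g\<close> is the constant \<open>\<integral>g = \<integral>f = 0\<close>, so
  \<open>lim a(n) = \<langle>f, g\<rangle> = 0\<close>. Since \<open>|P^n f| \<le> 1\<close>, the Lp norm is controlled by the L2 norm.
\<close>

section \<open>Expectations with respect to a pmf\<close>

lemma integrable_measure_pmf_bounded:
  fixes K :: "'a \<Rightarrow> real"
  assumes "\<And>s. \<bar>K s\<bar> \<le> C"
  shows "integrable (measure_pmf v) K"
  by (rule measure_pmf.integrable_const_bound[where B=C]) (auto simp: assms)

lemma abs_expectation_pmf_le:
  fixes K :: "'a \<Rightarrow> real"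
  assumes "\<And>s. \<bar>K s\<bar> \<le> C"
  shows "\<bar>measure_pmf.expectation v K\<bar> \<le> C"
proof -
  have "\<bar>measure_pmf.expectation v K\<bar> \<le> measure_pmf.expectation v (\<lambda>s. \<bar>K s\<bar>)"
    by (rule integral_abs_bound)
  also have "\<dots> \<le> measure_pmf.expectation v (\<lambda>s. C)"
    by (rule integral_mono) (auto intro: integrable_measure_pmf_bounded[where C=C] simp: assms)
  finally show ?thesis by simp
qed

lemma expectation_pmf_Fubini:
  fixes v :: "'g::countable pmf" and F :: "'g \<Rightarrow> 'y \<Rightarrow> real"
  assumes N: "prob_space N" and F: "\<And>s. F s \<in> borel_measurable N" and "\<And>s y. \<bar>F s y\<bar> \<le> C"
  shows "(\<lambda>y. \<integral>s. F s y \<partial>v) \<in> borel_measurable N"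
    and "(\<integral>y. (\<integral>s. F s y \<partial>v) \<partial>N) = (\<integral>s. (\<integral>y. F s y \<partial>N) \<partial>v)"
proof -
  interpret pair_prob_space "measure_pmf v" N
    by (simp add: pair_prob_space.intro measure_pmf.prob_space_axioms N pair_sigma_finite_def
       prob_space_imp_sigma_finite)
  have "(\<lambda>(s, y). F s y) \<in> borel_measurable (count_space UNIV \<Otimes>\<^sub>M N)"
    by (rule measurable_pair_measure_countable1) (auto simp: F)
  then have "(\<lambda>(s, y). F s y) \<in> borel_measurable (measure_pmf v \<Otimes>\<^sub>M N)"
    by (subst measurable_cong_sets[OF
        sets_pair_measure_cong[OF sets_measure_pmf_count_space refl] refl])
  then have int: "integrable (measure_pmf v \<Otimes>\<^sub>M N) (\<lambda>(s, y). F s y)"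
    by (intro integrable_const_bound[where B=C]) (auto simp: assms)
  show "(\<lambda>y. \<integral>s. F s y \<partial>v) \<in> borel_measurable N"
    using integrable_snd[OF int] by auto
  show "(\<integral>y. (\<integral>s. F s y \<partial>v) \<partial>N) = (\<integral>s. (\<integral>y. F s y \<partial>N) \<partial>v)"
    using Fubini_integral[OF int] .
qed

lemma expectation_pair_pmf:
  fixes F :: "'a \<times> 'b \<Rightarrow> real"
  assumes "\<And>z. \<bar>F z\<bar> \<le> C"
  shows "measure_pmf.expectation (pair_pmf u v) F =
     measure_pmf.expectation u (\<lambda>a. measure_pmf.expectation v (\<lambda>b. F (a, b)))"
proof -
  have "measure_pmf (pair_pmf u v) = measure_pmf u \<bind> (\<lambda>a. measure_pmf (map_pmf (Pair a) v))"
    by (simp add: pair_pmf_def map_pmf_def measure_pmf_bind)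
  then have "measure_pmf.expectation (pair_pmf u v) F =
     integral\<^sup>L (measure_pmf u \<bind> (\<lambda>a. measure_pmf (map_pmf (Pair a) v))) F"
    by simp
  also have "\<dots> = (\<integral>a. integral\<^sup>L (measure_pmf (map_pmf (Pair a) v)) F \<partial>measure_pmf u)"
    using assms
    by (intro integral_bind[where K="count_space UNIV" and B=C and B'=1])
      (auto intro: prob_space_imp_subprob_space measure_pmf.prob_space_axioms
        simp: measure_pmf_in_subprob_algebra measure_pmf.emeasure_space_1)
  finally show ?thesis by simp
qed

lemma expectation_symmetric_pmf:
  fixes w :: "'g::group_add pmf" and K :: "'g \<Rightarrow> real"
  assumes "\<And>s. pmf w s = pmf w (- s)"
  shows "measure_pmf.expectation w (\<lambda>s. K (- s)) = measure_pmf.expectation w K"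
proof -
  have "map_pmf uminus w = w"
  proof (rule pmf_eqI)
    fix s
    have "pmf (map_pmf uminus w) (- (- s)) = pmf w (- s)"
      by (rule pmf_map_inj') (simp add: inj_def)
    then show "pmf (map_pmf uminus w) s = pmf w s" using assms[of s] by simp
  qed
  then show ?thesis by (metis integral_map_pmf)
qed

lemma pmf_mult_le_expectation:
  fixes K :: "'a \<Rightarrow> real"
  assumes "\<And>t. 0 \<le> K t" "\<And>t. K t \<le> C"
  shows "pmf v s * K s \<le> measure_pmf.expectation v K"
proof -
  have "pmf v s * K s = measure_pmf.expectation v (\<lambda>t. K t * indicator {s} t)"
    by (subst integral_measure_pmf_real[where A="{s}"]) (auto simp: indicator_def split: if_splits)
  also have "\<dots> \<le> measure_pmf.expectation v K"
    using assms order_trans[OF assms(1,2)]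
    by (intro integral_mono integrable_measure_pmf_bounded[where C=C])
      (auto simp: indicator_def abs_le_iff)
  finally show ?thesis .
qed

lemma action_op_eq_expectation:
  fixes \<psi> :: "'x \<Rightarrow> real"
  assumes "\<And>y. \<bar>\<psi> y\<bar> \<le> C"
  shows "action_op A v \<psi> x = measure_pmf.expectation v (\<lambda>s. \<psi> (A s x))"
proof -
  have "integrable (measure_pmf v) (\<lambda>s. \<psi> (A s x))"
    by (rule integrable_measure_pmf_bounded[where C=C]) (simp add: assms)
  then have summable: "integrable (count_space UNIV) (\<lambda>s. pmf v s * \<psi> (A s x))"
    unfolding measure_pmf_eq_density by (subst (asm) integrable_density) auto
  have "measure_pmf.expectation v (\<lambda>s. \<psi> (A s x)) =
        (\<integral>s. pmf v s * \<psi> (A s x) \<partial>count_space UNIV)"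
    unfolding measure_pmf_eq_density by (subst integral_density) auto
  also have "\<dots> = infsetsum (\<lambda>s. pmf v s * \<psi> (A s x)) UNIV"
    by (simp add: infsetsum_def)
  also have "\<dots> = (\<Sum>\<^sub>\<infinity>s. pmf v s * \<psi> (A s x))"
    by (rule infsetsum_infsum) (simp add: abs_summable_on_def summable)
  finally show ?thesis by (simp add: action_op_def)
qed

section \<open>Bounded measurable functions\<close>

definition bounded_measurable :: "'x measure \<Rightarrow> real \<Rightarrow> ('x \<Rightarrow> real) \<Rightarrow> bool" where
  "bounded_measurable M C \<psi> \<longleftrightarrow> \<psi> \<in> borel_measurable M \<and> (\<forall>x. \<bar>\<psi> x\<bar> \<le> C)"

lemma bounded_measurableD:
  "bounded_measurable M C \<psi> \<Longrightarrow> \<psi> \<in> borel_measurable M"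
  "bounded_measurable M C \<psi> \<Longrightarrow> \<bar>\<psi> x\<bar> \<le> C"
  by (auto simp: bounded_measurable_def)

lemma bounded_measurable_mult:
  "bounded_measurable M C \<phi> \<Longrightarrow> bounded_measurable M D \<psi> \<Longrightarrow>
    bounded_measurable M (C * D) (\<lambda>x. \<phi> x * \<psi> x)"
  unfolding bounded_measurable_def by (auto simp: abs_mult intro: mult_mono')

lemma bounded_measurable_diff:
  "bounded_measurable M C \<phi> \<Longrightarrow> bounded_measurable M D \<psi> \<Longrightarrow>
    bounded_measurable M (C + D) (\<lambda>x. \<phi> x - \<psi> x)"
  unfolding bounded_measurable_def by (auto intro: order_trans[OF abs_triangle_ineq4] add_mono)

lemma bounded_measurable_square:
  "bounded_measurable M C \<psi> \<Longrightarrow> bounded_measurable M (C * C) (\<lambda>x. (\<psi> x)\<^sup>2)"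
  using bounded_measurable_mult[of M C \<psi> C \<psi>] by (simp add: power2_eq_square)

lemma bounded_measurable_abs:
  "bounded_measurable M C \<psi> \<Longrightarrow> bounded_measurable M C (\<lambda>x. \<bar>\<psi> x\<bar>)"
  unfolding bounded_measurable_def by auto

lemma bounded_measurable_comp:
  "T \<in> measurable M N \<Longrightarrow> bounded_measurable N C \<psi> \<Longrightarrow> bounded_measurable M C (\<lambda>x. \<psi> (T x))"
  unfolding bounded_measurable_def by auto

lemma bounded_measurable_indicator: "A \<in> sets M \<Longrightarrow> bounded_measurable M 1 (indicator A)"
  by (auto simp: bounded_measurable_def)

lemma (in prob_space) bounded_measurable_centered_indicator:
  assumes "A \<in> sets M"
  shows "bounded_measurable M 1 (\<lambda>x. indicator A x - prob A)"
  using assms unfolding bounded_measurable_def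
  by (auto simp: abs_le_iff indicator_def) (use prob_le_1[of A] measure_nonneg[of M A] in linarith)+

lemma (in finite_measure) integrable_bounded_measurable:
  "bounded_measurable M C \<psi> \<Longrightarrow> integrable M \<psi>"
  by (intro integrable_const_bound[where B=C]) (auto simp: bounded_measurable_def)

lemma (in prob_space) abs_integral_le_bound:
  assumes "bounded_measurable M C \<psi>"
  shows "\<bar>integral\<^sup>L M \<psi>\<bar> \<le> C"
proof -
  have "\<bar>integral\<^sup>L M \<psi>\<bar> \<le> (\<integral>x. \<bar>\<psi> x\<bar> \<partial>M)"
    by (rule integral_abs_bound)
  also have "\<dots> \<le> (\<integral>x. C \<partial>M)"
    using assms integrable_bounded_measurable[OF assms]
    by (intro integral_mono) (auto simp: bounded_measurable_def)
  finally show ?thesis by (simp add: prob_space)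
qed

lemma (in prob_space) integral_centered_indicator:
  "A \<in> sets M \<Longrightarrow> (\<integral>x. indicator A x - prob A \<partial>M) = 0"
  using integrable_bounded_measurable[OF bounded_measurable_indicator] by (simp add: prob_space)

lemma (in prob_space) square_integral_le_integral_square:
  fixes X :: "'a \<Rightarrow> real"
  assumes "integrable M X" "integrable M (\<lambda>x. (X x)\<^sup>2)"
  shows "(integral\<^sup>L M X)\<^sup>2 \<le> (\<integral>x. (X x)\<^sup>2 \<partial>M)"
  using variance_eq[OF assms] variance_positive[of X] by simp

lemma (in prob_space) integral_abs_le_sqrt_integral_square:
  assumes "bounded_measurable M C h"
  shows "(\<integral>x. \<bar>h x\<bar> \<partial>M) \<le> sqrt (\<integral>x. (h x)\<^sup>2 \<partial>M)"
  using square_integral_le_integral_square[of "\<lambda>x. \<bar>h x\<bar>"]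
    integrable_bounded_measurable[OF bounded_measurable_abs[OF assms]]
    integrable_bounded_measurable[OF bounded_measurable_square[OF assms]]
  by (intro real_le_rsqrt) simp

lemma (in finite_measure) integral_square_diff:
  assumes "bounded_measurable M C u" "bounded_measurable M D v"
  shows "(\<integral>x. (u x - v x)\<^sup>2 \<partial>M) =
    (\<integral>x. (u x)\<^sup>2 \<partial>M) + (\<integral>x. (v x)\<^sup>2 \<partial>M) - 2 * (\<integral>x. u x * v x \<partial>M)"
proof -
  have int: "integrable M (\<lambda>x. (u x)\<^sup>2)" "integrable M (\<lambda>x. (v x)\<^sup>2)"
    "integrable M (\<lambda>x. u x * v x)"
    using assms by (auto intro!: integrable_bounded_measurable bounded_measurable_square
      bounded_measurable_mult)
  have "(\<integral>x. (u x - v x)\<^sup>2 \<partial>M) = (\<integral>x. ((u x)\<^sup>2 + (v x)\<^sup>2) - 2 * (u x * v x) \<partial>M)"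
    by (simp add: power2_diff algebra_simps)
  also have "\<dots> = (\<integral>x. (u x)\<^sup>2 \<partial>M) + (\<integral>x. (v x)\<^sup>2 \<partial>M) - 2 * (\<integral>x. u x * v x \<partial>M)"
    using int by simp
  finally show ?thesis .
qed

lemma (in finite_measure) AE_eq_if_integral_square_diff_eq_0:
  assumes "bounded_measurable M C u" "bounded_measurable M D v" "(\<integral>x. (u x - v x)\<^sup>2 \<partial>M) = 0"
  shows "AE x in M. u x = v x"
proof -
  have int: "integrable M (\<lambda>x. (u x - v x)\<^sup>2)"
    using integrable_bounded_measurable[OF bounded_measurable_square[OF
        bounded_measurable_diff[OF assms(1,2)]]] .
  then have "AE x in M. (u x - v x)\<^sup>2 = 0"
    using assms(3) integral_nonneg_eq_0_iff_AE[OF int] by simp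
  then show ?thesis by eventually_elim simp
qed

lemma (in finite_measure) tendsto_integral_bounded_measurable:
  assumes "\<And>k. bounded_measurable M C (h k)" "bounded_measurable M C g"
    and "AE x in M. (\<lambda>k. h k x) \<longlonglongrightarrow> g x"
  shows "(\<lambda>k. integral\<^sup>L M (h k)) \<longlonglongrightarrow> integral\<^sup>L M g"
  using assms by (intro integral_dominated_convergence[where w="\<lambda>_. C"])
    (auto simp: bounded_measurable_def)

lemma (in prob_space) Lp_norm_tendsto_0_if_L2:
  assumes u: "\<And>n. bounded_measurable M 1 (u n)" and L2: "(\<lambda>n. \<integral>x. (u n x)\<^sup>2 \<partial>M) \<longlonglongrightarrow> 0"
    and p: "1 \<le> p"
  shows "(\<lambda>n. (\<integral>x. \<bar>u n x\<bar> powr p \<partial>M) powr (1 / p)) \<longlonglongrightarrow> 0"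
proof -
  have powr_le: "\<bar>u n x\<bar> powr p \<le> \<bar>u n x\<bar>" for n x
  proof -
    have "\<bar>u n x\<bar> \<le> 1" by (rule bounded_measurableD(2)[OF u])
    then have "\<bar>u n x\<bar> powr p \<le> \<bar>u n x\<bar> powr 1"
      using p by (intro powr_mono') auto
    then show ?thesis by (cases "u n x = 0") auto
  qed
  define I where "I n = (\<integral>x. \<bar>u n x\<bar> powr p \<partial>M)" for n
  have "I n \<le> (\<integral>x. \<bar>u n x\<bar> \<partial>M)" for n
    unfolding I_def
  proof (intro integral_mono powr_le)
    have "(\<lambda>x. \<bar>u n x\<bar> powr p) \<in> borel_measurable M"
      using bounded_measurableD(1)[OF u] by measurable
    moreover have "\<bar>u n x\<bar> powr p \<le> 1" for x
      using powr_le[of n x] bounded_measurableD(2)[OF u, of n x] by linarith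
    ultimately show "integrable M (\<lambda>x. \<bar>u n x\<bar> powr p)"
      by (intro integrable_bounded_measurable[where C=1]) (auto simp: bounded_measurable_def)
  qed (rule integrable_bounded_measurable[OF bounded_measurable_abs[OF u]])
  also have "\<dots> n \<le> sqrt (\<integral>x. (u n x)\<^sup>2 \<partial>M)" for n
    by (rule integral_abs_le_sqrt_integral_square[OF u])
  finally have I_le: "I n \<le> sqrt (\<integral>x. (u n x)\<^sup>2 \<partial>M)" for n .
  have I_nonneg: "0 \<le> I n" for n
    unfolding I_def by (rule integral_nonneg_AE) auto
  have sqrt_L2: "(\<lambda>n. sqrt (\<integral>x. (u n x)\<^sup>2 \<partial>M)) \<longlonglongrightarrow> 0"
    using tendsto_real_sqrt[OF L2] by simp
  have "I \<longlonglongrightarrow> 0"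
    by (rule real_tendsto_sandwich[OF _ _ tendsto_const sqrt_L2]) (use I_le I_nonneg in auto)
  then show ?thesis
    unfolding I_def using p
    by (intro tendsto_zero_powrI[OF _ tendsto_const]) (auto intro: integral_nonneg_AE)
qed

section \<open>Measure-preserving actions\<close>

text \<open>
  The assumption \<open>space M = UNIV\<close> (true for Borel measures) lets preimages and images under the
  action be used without intersecting with the space.
\<close>

locale pmp_system = prob_space M for M :: "'x measure" +
  fixes T :: "'g::{group_add, countable} \<Rightarrow> 'x \<Rightarrow> 'x"
  assumes pmp: "pmp_action M T" and space_eq_UNIV: "space M = UNIV"
begin

lemma measurable_T[measurable]: "T s \<in> measurable M M"
  using pmp by (auto simp: pmp_action_def)

lemma distr_T: "distr M M (T s) = M"
  using pmp by (auto simp: pmp_action_def)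

lemma T_zero: "T 0 x = x"
  using pmp by (auto simp: pmp_action_def)

lemma T_add: "T (a + b) x = T a (T b x)"
  using pmp by (auto simp: pmp_action_def)

lemma T_T_uminus: "T a (T (- a) x) = x"
  using T_add[of a "- a" x] by (simp add: T_zero)

lemma T_uminus_T: "T (- a) (T a x) = x"
  using T_add[of "- a" a x] by (simp add: T_zero)

lemma image_T: "T s ` S = {x. T (- s) x \<in> S}"
proof safe
  fix x assume "T (- s) x \<in> S"
  then show "x \<in> T s ` S"
    by (rule rev_image_eqI) (simp add: T_T_uminus)
qed (simp add: T_uminus_T)

lemma sets_vimage_T: "S \<in> sets M \<Longrightarrow> {x. T s x \<in> S} \<in> sets M"
  using measurable_sets[OF measurable_T, of S s] by (simp add: space_eq_UNIV vimage_def)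

lemma integral_T:
  fixes \<psi> :: "'x \<Rightarrow> real"
  assumes "\<psi> \<in> borel_measurable M"
  shows "(\<integral>x. \<psi> (T s x) \<partial>M) = integral\<^sup>L M \<psi>"
  by (metis assms distr_T integral_distr measurable_T)

lemma AE_T:
  assumes "AE x in M. P x"
  shows "AE x in M. P (T s x)"
proof -
  have "AE x in distr M M (T s). P x"
    unfolding distr_T by (fact assms)
  then show ?thesis
    by (rule AE_distrD[OF measurable_T])
qed

lemma bounded_measurable_T:
  "bounded_measurable M C \<psi> \<Longrightarrow> bounded_measurable M C (\<lambda>x. \<psi> (T s x))"
  by (rule bounded_measurable_comp[OF measurable_T])

lemma null_sym_diff_image_iff_AE:
  assumes S: "S \<in> sets M"
  shows "measure M (T s ` S - S \<union> (S - T s ` S)) = 0 \<longleftrightarrow>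
    (AE x in M. indicator S (T (- s) x) = (indicator S x :: real))"
proof -
  let ?N = "{x. T (- s) x \<in> S} - S \<union> (S - {x. T (- s) x \<in> S})"
  have N: "?N \<in> sets M"
    using S sets_vimage_T by auto
  have "{x \<in> space M. indicator S (T (- s) x) \<noteq> (indicator S x :: real)} = ?N"
    by (auto simp: space_eq_UNIV indicator_def)
  then have "(AE x in M. indicator S (T (- s) x) = (indicator S x :: real)) \<longleftrightarrow> emeasure M ?N = 0"
    by (intro AE_iff_measurable[OF N]) simp
  also have "\<dots> \<longleftrightarrow> measure M ?N = 0"
    by (simp add: emeasure_eq_measure)
  also have "?N = T s ` S - S \<union> (S - T s ` S)"
    by (simp only: image_T)
  finally show ?thesis ..
qed

lemma ae_invariant_iff_AE:
  "S \<in> sets M \<Longrightarrow>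
    ae_invariant M T S \<longleftrightarrow> (\<forall>s. AE x in M. indicator S (T s x) = (indicator S x :: real))"
  unfolding ae_invariant_def null_sym_diff_image_iff_AE by (metis minus_minus)

lemma ae_invariant_superlevel_set:
  fixes u :: "'x \<Rightarrow> real"
  assumes "u \<in> borel_measurable M" and "\<And>s. AE x in M. u (T s x) = u x"
  shows "ae_invariant M T {x. c < u x}"
proof -
  have "{x. c < u x} \<in> sets M"
    using measurable_sets[OF assms(1), of "{c<..}"] by (simp add: space_eq_UNIV vimage_def)
  moreover have
    "AE x in M. indicator {x. c < u x} (T s x) = (indicator {x. c < u x} x :: real)" for s
    using assms(2)[of s] by eventually_elim (simp add: indicator_def)
  ultimately show ?thesis
    using ae_invariant_iff_AE by blast
qed

lemma AE_invariant_gen_subgroup: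
  assumes "\<And>s. s \<in> S \<Longrightarrow> AE x in M. u (T s x) = u x" and "s \<in> gen_subgroup S"
  shows "AE x in M. u (T s x) = u x"
  using assms(2)
proof induction
  case (gen_base s)
  then show ?case by (rule assms(1))
next
  case gen_zero
  then show ?case by (simp add: T_zero)
next
  case (gen_add a b)
  have "AE x in M. u (T a (T b x)) = u (T b x)"
    using AE_T[OF gen_add.IH(1)] .
  then show ?case
    using gen_add.IH(2) by eventually_elim (simp add: T_add)
next
  case (gen_uminus a)
  have "AE x in M. u (T a (T (- a) x)) = u (T (- a) x)"
    using AE_T[OF gen_uminus.IH] .
  then show ?case
    by eventually_elim (simp add: T_T_uminus)
qed

lemma tendsto_integral_shift_defect:
  assumes "\<And>k. bounded_measurable M C (h k)" "bounded_measurable M C g"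
    and "AE x in M. (\<lambda>k. h k x) \<longlonglongrightarrow> g x"
  shows "(\<lambda>k. \<integral>x. (h k (T s x) - h k x)\<^sup>2 \<partial>M) \<longlonglongrightarrow> (\<integral>x. (g (T s x) - g x)\<^sup>2 \<partial>M)"
proof (rule tendsto_integral_bounded_measurable)
  show "bounded_measurable M ((C + C) * (C + C)) (\<lambda>x. (h k (T s x) - h k x)\<^sup>2)" for k
    by (intro bounded_measurable_square bounded_measurable_diff bounded_measurable_T assms)
  show "bounded_measurable M ((C + C) * (C + C)) (\<lambda>x. (g (T s x) - g x)\<^sup>2)"
    by (intro bounded_measurable_square bounded_measurable_diff bounded_measurable_T assms)
  show "AE x in M. (\<lambda>k. (h k (T s x) - h k x)\<^sup>2) \<longlonglongrightarrow> (g (T s x) - g x)\<^sup>2"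
    using AE_T[OF assms(3)] assms(3) by eventually_elim (intro tendsto_intros)
qed

lemma ergodic_AE_le_integral:
  assumes B: "pmp_system M B" and erg: "ergodic_pair M T B"
    and u: "bounded_measurable M C u"
    and inv_T: "\<And>s. AE x in M. u (T s x) = u x" and inv_B: "\<And>h. AE x in M. u (B h x) = u x"
  shows "AE x in M. u x \<le> integral\<^sup>L M u"
proof -
  interpret B: pmp_system M B by (fact B)
  let ?S = "{x. integral\<^sup>L M u < u x}"
  have S: "?S \<in> sets M"
    using measurable_sets[OF bounded_measurableD(1)[OF u], of "{integral\<^sup>L M u<..}"]
    by (simp add: space_eq_UNIV vimage_def)
  have "ae_invariant M T ?S" "ae_invariant M B ?S"
    using bounded_measurableD(1)[OF u] inv_T inv_B
    by (auto intro: ae_invariant_superlevel_set B.ae_invariant_superlevel_set)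
  then have "measure M ?S = 0 \<or> measure M ?S = 1"
    using erg S unfolding ergodic_pair_def by blast
  then show ?thesis
  proof
    assume "measure M ?S = 0"
    then have "AE x in M. x \<notin> ?S"
      using S by (intro AE_I[where N="?S"]) (auto simp: emeasure_eq_measure)
    then show ?thesis by eventually_elim auto
  next
    assume "measure M ?S = 1"
    then have above: "AE x in M. integral\<^sup>L M u < u x"
      using AE_prob_1 by force
    have int: "integrable M (\<lambda>x. u x - integral\<^sup>L M u)"
      using integrable_bounded_measurable[OF u] by simp
    have "integral\<^sup>L M (\<lambda>x. u x - integral\<^sup>L M u) = 0"
      using integrable_bounded_measurable[OF u] by (simp add: prob_space)
    moreover have "AE x in M. 0 \<le> u x - integral\<^sup>L M u"
      using above by eventually_elim simp
    ultimately have "AE x in M. u x - integral\<^sup>L M u = 0"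
      using integral_nonneg_eq_0_iff_AE[OF int] by simp
    with above have "AE x in M. False" by eventually_elim simp
    then show ?thesis by simp
  qed
qed

lemma ergodic_AE_eq_integral:
  assumes B: "pmp_system M B" and erg: "ergodic_pair M T B"
    and u: "bounded_measurable M C u"
    and inv_T: "\<And>s. AE x in M. u (T s x) = u x" and inv_B: "\<And>h. AE x in M. u (B h x) = u x"
  shows "AE x in M. u x = integral\<^sup>L M u"
proof -
  have "bounded_measurable M C (\<lambda>x. - u x)"
    using u by (simp add: bounded_measurable_def)
  moreover have "AE x in M. - u (T s x) = - u x" "AE x in M. - u (B h x) = - u x" for s h
    using inv_T[of s] inv_B[of h] by (auto elim: AE_mp)
  ultimately have "AE x in M. - u x \<le> integral\<^sup>L M (\<lambda>x. - u x)"
    by (intro ergodic_AE_le_integral[OF B erg]) auto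
  moreover have "AE x in M. u x \<le> integral\<^sup>L M u"
    by (rule ergodic_AE_le_integral[OF B erg u inv_T inv_B])
  ultimately show ?thesis by eventually_elim simp
qed

text \<open>The operator \<open>A(v)\<close> of the paper, written as an expectation so that Fubini applies.\<close>

definition avg :: "'g pmf \<Rightarrow> ('x \<Rightarrow> real) \<Rightarrow> 'x \<Rightarrow> real" where
  "avg v \<psi> x = measure_pmf.expectation v (\<lambda>s. \<psi> (T s x))"

lemma action_op_eq_avg: "bounded_measurable M C \<psi> \<Longrightarrow> action_op T v \<psi> = avg v \<psi>"
  unfolding avg_def
  by (intro ext action_op_eq_expectation[where C=C]) (simp add: bounded_measurableD(2))

lemma bounded_measurable_avg:
  assumes "bounded_measurable M C \<psi>"
  shows "bounded_measurable M C (avg v \<psi>)"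
  unfolding bounded_measurable_def avg_def
  using assms measurable_T
  by (auto intro!: expectation_pmf_Fubini(1)[where C=C] abs_expectation_pmf_le
      simp: bounded_measurable_def prob_space_axioms)

lemma integral_mult_avg:
  assumes "bounded_measurable M C \<phi>" "bounded_measurable M D \<psi>"
  shows "(\<integral>x. \<phi> x * avg v \<psi> x \<partial>M) = measure_pmf.expectation v (\<lambda>s. \<integral>x. \<phi> x * \<psi> (T s x) \<partial>M)"
proof -
  have "(\<integral>x. \<phi> x * avg v \<psi> x \<partial>M) =
      (\<integral>x. measure_pmf.expectation v (\<lambda>s. \<phi> x * \<psi> (T s x)) \<partial>M)"
    unfolding avg_def by simp
  also have "\<dots> = measure_pmf.expectation v (\<lambda>s. \<integral>x. \<phi> x * \<psi> (T s x) \<partial>M)"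
    using bounded_measurable_mult[OF assms(1) bounded_measurable_T[OF assms(2)]]
    by (intro expectation_pmf_Fubini(2)[where C="C * D"])
      (auto simp: bounded_measurable_def prob_space_axioms)
  finally show ?thesis .
qed

lemma integral_avg:
  assumes "bounded_measurable M C \<psi>"
  shows "integral\<^sup>L M (avg v \<psi>) = integral\<^sup>L M \<psi>"
  using integral_mult_avg[of 1 "\<lambda>_. 1" C \<psi> v] assms
    integral_T[OF bounded_measurableD(1)[OF assms]]
  by (simp add: bounded_measurable_def measure_pmf.prob_space)

lemma avg_add_const:
  assumes "bounded_measurable M C \<psi>"
  shows "avg v (\<lambda>y. \<psi> y + c) x = avg v \<psi> x + c"
proof -
  have "integrable (measure_pmf v) (\<lambda>s. \<psi> (T s x))"
    using assms by (intro integrable_measure_pmf_bounded[where C=C]) (simp add: bounded_measurableD)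
  then show ?thesis
    unfolding avg_def by (simp add: measure_pmf.prob_space)
qed

lemma avg_AE_cong:
  assumes "AE x in M. \<psi> x = \<phi> x"
  shows "AE x in M. avg v \<psi> x = avg v \<phi> x"
proof -
  have "AE x in M. \<forall>s. \<psi> (T s x) = \<phi> (T s x)"
    using AE_T[OF assms] by (subst AE_all_countable) auto
  then show ?thesis
    unfolding avg_def by eventually_elim simp
qed

lemma avg_pow_AE_cong:
  "AE x in M. \<psi> x = \<phi> x \<Longrightarrow> AE x in M. (avg v ^^ n) \<psi> x = (avg v ^^ n) \<phi> x"
  by (induction n) (simp_all add: avg_AE_cong)

lemma avg_square_le:
  assumes "bounded_measurable M C \<psi>"
  shows "(avg v \<psi> x)\<^sup>2 \<le> avg v (\<lambda>y. (\<psi> y)\<^sup>2) x"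
  unfolding avg_def
  using assms bounded_measurableD(2)[OF bounded_measurable_square[OF assms]]
  by (intro measure_pmf.square_integral_le_integral_square
      integrable_measure_pmf_bounded[where C=C] integrable_measure_pmf_bounded[where C="C * C"])
    (auto simp: bounded_measurable_def)

lemma avg_conv_pmf:
  assumes "bounded_measurable M C \<psi>"
  shows "avg (conv_pmf u v) \<psi> x = avg v (avg u \<psi>) x"
proof -
  have bound: "\<bar>\<psi> y\<bar> \<le> C" for y
    using assms by (simp add: bounded_measurableD)
  have "avg (conv_pmf u v) \<psi> x = measure_pmf.expectation (pair_pmf u v) (\<lambda>(a, b). \<psi> (T (a + b) x))"
    unfolding avg_def conv_pmf_def by (simp add: case_prod_unfold)
  also have "\<dots> = measure_pmf.expectation u (\<lambda>a. measure_pmf.expectation v (\<lambda>b. \<psi> (T a (T b x))))"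
    by (subst expectation_pair_pmf[where C=C]) (auto simp: bound T_add)
  also have "\<dots> = measure_pmf.expectation v (\<lambda>b. measure_pmf.expectation u (\<lambda>a. \<psi> (T a (T b x))))"
    by (rule expectation_pmf_Fubini(2)[where C=C]) (auto simp: bound measure_pmf.prob_space_axioms)
  finally show ?thesis
    unfolding avg_def .
qed

lemma avg_conv_pow:
  assumes "bounded_measurable M C \<psi>"
  shows "avg (conv_pow v n) \<psi> = (avg v ^^ n) \<psi>"
proof (induction n)
  case 0
  then show ?case by (auto simp: avg_def T_zero)
next
  case (Suc n)
  then show ?case
    by (auto simp: avg_conv_pmf[OF assms])
qed

lemma integral_mult_T_swap:
  assumes "bounded_measurable M C \<phi>" "bounded_measurable M D \<psi>"
  shows "(\<integral>x. \<phi> x * \<psi> (T s x) \<partial>M) = (\<integral>x. \<phi> (T (- s) x) * \<psi> x \<partial>M)"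
  using integral_T[OF bounded_measurableD(1)[OF bounded_measurable_mult[OF assms(1)
      bounded_measurable_T[OF assms(2), of s]]], of "- s"]
  by (simp add: T_T_uminus)

lemma expectation_shift_defect:
  assumes h: "bounded_measurable M C h"
  shows "measure_pmf.expectation v (\<lambda>s. \<integral>x. (h (T s x) - h x)\<^sup>2 \<partial>M) =
    2 * (\<integral>x. (h x)\<^sup>2 \<partial>M) - 2 * (\<integral>x. h x * avg v h x \<partial>M)"
proof -
  have "(\<integral>x. (h (T s x) - h x)\<^sup>2 \<partial>M) = 2 * (\<integral>x. (h x)\<^sup>2 \<partial>M) - 2 * (\<integral>x. h x * h (T s x) \<partial>M)" for s
    using integral_square_diff[OF bounded_measurable_T[OF h] h, of s]
      integral_T[OF bounded_measurableD(1)[OF bounded_measurable_square[OF h]], of s]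
    by (simp add: mult.commute)
  moreover have "integrable (measure_pmf v) (\<lambda>s. \<integral>x. h x * h (T s x) \<partial>M)"
    by (intro integrable_measure_pmf_bounded[where C="C * C"]
        abs_integral_le_bound[OF bounded_measurable_mult[OF h bounded_measurable_T[OF h]]])
  ultimately show ?thesis
    by (simp add: measure_pmf.prob_space integral_mult_avg[OF h h])
qed

lemma bounded_measurable_avg_pow:
  "bounded_measurable M C \<psi> \<Longrightarrow> bounded_measurable M C ((avg v ^^ n) \<psi>)"
  by (induction n) (simp_all add: bounded_measurable_avg)

lemma avg_pow_add_const:
  assumes "bounded_measurable M C \<psi>"
  shows "(avg v ^^ n) (\<lambda>y. \<psi> y + c) x = (avg v ^^ n) \<psi> x + c"
proof (induction n arbitrary: x)
  case (Suc n)
  then have "(avg v ^^ n) (\<lambda>y. \<psi> y + c) = (\<lambda>y. (avg v ^^ n) \<psi> y + c)"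
    by auto
  then have "(avg v ^^ Suc n) (\<lambda>y. \<psi> y + c) x = avg v (\<lambda>y. (avg v ^^ n) \<psi> y + c) x"
    by simp
  also have "\<dots> = (avg v ^^ Suc n) \<psi> x + c"
    by (simp add: avg_add_const[OF bounded_measurable_avg_pow[OF assms]])
  finally show ?case .
qed simp

lemma avg_pow_commuting:
  assumes "\<And>s x. T s (S x) = S (T s x)"
  shows "(avg v ^^ n) \<phi> (S x) = (avg v ^^ n) (\<lambda>y. \<phi> (S y)) x"
proof (induction n arbitrary: x)
  case (Suc n)
  have "(avg v ^^ Suc n) \<phi> (S x) = avg v (\<lambda>y. (avg v ^^ n) \<phi> (S y)) x"
    by (simp add: avg_def assms)
  then show ?case
    by (simp add: Suc)
qed simp

end

section \<open>The symmetric random walk applied to a bounded function\<close>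

locale symmetric_walk = pmp_system M T
  for M :: "'x measure" and T :: "'g::{group_add, countable} \<Rightarrow> 'x \<Rightarrow> 'x" +
  fixes w :: "'g pmf" and f :: "'x \<Rightarrow> real" and C :: real
  assumes symmetric: "\<And>s. pmf w s = pmf w (- s)"
    and bounded_f: "bounded_measurable M C f"
begin

lemma avg_self_adjoint:
  assumes "bounded_measurable M C1 \<phi>" "bounded_measurable M C2 \<psi>"
  shows "(\<integral>x. \<phi> x * avg w \<psi> x \<partial>M) = (\<integral>x. avg w \<phi> x * \<psi> x \<partial>M)"
proof -
  have "(\<integral>x. \<phi> x * avg w \<psi> x \<partial>M) = measure_pmf.expectation w (\<lambda>s. \<integral>x. \<phi> x * \<psi> (T s x) \<partial>M)"
    by (rule integral_mult_avg[OF assms])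
  also have "\<dots> = measure_pmf.expectation w (\<lambda>s. \<integral>x. \<phi> (T (- s) x) * \<psi> x \<partial>M)"
    using integral_mult_T_swap[OF assms] by simp
  also have "\<dots> = measure_pmf.expectation w (\<lambda>s. \<integral>x. \<psi> x * \<phi> (T s x) \<partial>M)"
    using expectation_symmetric_pmf[OF symmetric, of "\<lambda>s. \<integral>x. \<phi> (T s x) * \<psi> x \<partial>M"]
    by (simp add: mult.commute)
  also have "\<dots> = (\<integral>x. \<psi> x * avg w \<phi> x \<partial>M)"
    by (rule integral_mult_avg[OF assms(2,1), symmetric])
  finally show ?thesis
    by (simp add: mult.commute)
qed

lemma expectation_conv_shift_defect:
  assumes h: "bounded_measurable M D h"
  shows "measure_pmf.expectation (conv_pmf w w) (\<lambda>s. \<integral>x. (h (T s x) - h x)\<^sup>2 \<partial>M) =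
    2 * (\<integral>x. (h x)\<^sup>2 \<partial>M) - 2 * (\<integral>x. (avg w h x)\<^sup>2 \<partial>M)"
proof -
  have "(\<integral>x. h x * avg (conv_pmf w w) h x \<partial>M) = (\<integral>x. h x * avg w (avg w h) x \<partial>M)"
    by (simp add: avg_conv_pmf[OF h])
  also have "\<dots> = (\<integral>x. (avg w h x)\<^sup>2 \<partial>M)"
    using avg_self_adjoint[OF h bounded_measurable_avg[OF h]] by (simp add: power2_eq_square)
  finally show ?thesis
    by (simp add: expectation_shift_defect[OF h])
qed

abbreviation walk :: "nat \<Rightarrow> 'x \<Rightarrow> real" where
  "walk n \<equiv> (avg w ^^ n) f"

lemma bounded_measurable_walk: "bounded_measurable M C (walk n)"
  by (rule bounded_measurable_avg_pow[OF bounded_f])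

lemma integral_walk: "integral\<^sup>L M (walk n) = integral\<^sup>L M f"
  by (induction n) (simp_all add: integral_avg[OF bounded_measurable_walk])

lemma integral_walk_mult: "(\<integral>x. walk i x * walk j x \<partial>M) = (\<integral>x. f x * walk (i + j) x \<partial>M)"
proof (induction i arbitrary: j)
  case (Suc i)
  have "(\<integral>x. walk (Suc i) x * walk j x \<partial>M) = (\<integral>x. walk i x * walk (Suc j) x \<partial>M)"
    using avg_self_adjoint[OF bounded_measurable_walk bounded_measurable_walk, of i j] by simp
  also have "\<dots> = (\<integral>x. f x * walk (i + Suc j) x \<partial>M)"
    by (rule Suc.IH)
  finally show ?case
    by simp
qed simp

definition sq_norm :: "nat \<Rightarrow> real" where
  "sq_norm n = (\<integral>x. (walk n x)\<^sup>2 \<partial>M)"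

lemma integral_walk_mult_even:
  assumes "even (i + j)"
  shows "(\<integral>x. walk i x * walk j x \<partial>M) = sq_norm ((i + j) div 2)"
proof -
  have "(i + j) div 2 + (i + j) div 2 = i + j"
    using assms by (metis dvd_mult_div_cancel mult_2)
  then show ?thesis
    using integral_walk_mult[of i j] integral_walk_mult[of "(i + j) div 2" "(i + j) div 2"]
    by (simp add: sq_norm_def power2_eq_square)
qed

lemma sq_norm_nonneg: "0 \<le> sq_norm n"
  unfolding sq_norm_def by (rule integral_nonneg_AE) auto

lemma sq_norm_le: "sq_norm n \<le> C * C"
  using abs_integral_le_bound[OF bounded_measurable_square[OF bounded_measurable_walk]]
  by (simp add: sq_norm_def abs_le_iff)

lemma sq_norm_Suc_le: "sq_norm (Suc n) \<le> sq_norm n"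
proof -
  have "sq_norm (Suc n) \<le> (\<integral>x. avg w (\<lambda>y. (walk n y)\<^sup>2) x \<partial>M)"
    unfolding sq_norm_def funpow.simps comp_def
    using bounded_measurable_square[OF bounded_measurable_walk]
      bounded_measurable_square[OF bounded_measurable_avg[OF bounded_measurable_walk]]
    by (intro integral_mono avg_square_le[OF bounded_measurable_walk]
        integrable_bounded_measurable bounded_measurable_avg) auto
  also have "\<dots> = sq_norm n"
    unfolding sq_norm_def
    by (rule integral_avg[OF bounded_measurable_square[OF bounded_measurable_walk]])
  finally show ?thesis .
qed

definition sq_norm_lim :: real where
  "sq_norm_lim = lim sq_norm"

lemma sq_norm_tendsto: "sq_norm \<longlonglongrightarrow> sq_norm_lim"
proof -
  have "convergent sq_norm"
  proof (rule Bseq_monoseq_convergent)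
    show "Bseq sq_norm"
      using sq_norm_nonneg sq_norm_le by (intro BseqI'[where K="C * C"]) auto
    show "monoseq sq_norm"
      using sq_norm_Suc_le by (simp add: decseq_Suc_iff monoseq_iff)
  qed
  then show ?thesis
    by (simp add: sq_norm_lim_def convergent_LIMSEQ_iff)
qed

lemma integral_square_even_walk_diff:
  "(\<integral>x. (walk (2 * n) x - walk (2 * m) x)\<^sup>2 \<partial>M) =
    sq_norm (2 * n) + sq_norm (2 * m) - 2 * sq_norm (n + m)"
  using integral_square_diff[OF bounded_measurable_walk bounded_measurable_walk, of "2 * n" "2 * m"]
    integral_walk_mult_even[of "2 * n" "2 * m"]
  by (simp add: sq_norm_def)

lemma even_walk_L1_Cauchy:
  assumes "0 < e"
  shows "\<exists>N. \<forall>n\<ge>N. \<forall>m\<ge>N. (\<integral>x. \<bar>walk (2 * n) x - walk (2 * m) x\<bar> \<partial>M) < e"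
proof -
  obtain N where N: "\<And>k. k \<ge> N \<Longrightarrow> \<bar>sq_norm k - sq_norm_lim\<bar> < e * e / 4"
    using LIMSEQ_D[OF sq_norm_tendsto, of "e * e / 4"] assms by auto
  have "(\<integral>x. \<bar>walk (2 * n) x - walk (2 * m) x\<bar> \<partial>M) < e" if "n \<ge> N" "m \<ge> N" for n m
  proof -
    have "sq_norm (2 * n) + sq_norm (2 * m) - 2 * sq_norm (n + m) < e\<^sup>2"
      using N[of "2 * n"] N[of "2 * m"] N[of "n + m"] that
      unfolding abs_less_iff power2_eq_square by linarith
    then have "sqrt (\<integral>x. (walk (2 * n) x - walk (2 * m) x)\<^sup>2 \<partial>M) < sqrt (e\<^sup>2)"
      unfolding integral_square_even_walk_diff by (rule real_sqrt_less_mono)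
    then have "sqrt (\<integral>x. (walk (2 * n) x - walk (2 * m) x)\<^sup>2 \<partial>M) < e"
      using assms by simp
    then show ?thesis
      using integral_abs_le_sqrt_integral_square[OF bounded_measurable_diff[OF
          bounded_measurable_walk bounded_measurable_walk], of "2 * n" "2 * m"] by linarith
  qed
  then show ?thesis by blast
qed

lemma even_walk_AE_convergent_subseq:
  "\<exists>r g. strict_mono r \<and> bounded_measurable M C g \<and> (AE x in M. (\<lambda>k. walk (2 * r k) x) \<longlonglongrightarrow> g x)"
proof -
  obtain r where r: "strict_mono r" and Cauchy: "AE x in M. Cauchy (\<lambda>k. walk (2 * r k) x)"
    using cauchy_L1_AE_cauchy_subseq[of M "\<lambda>n. walk (2 * n)"] even_walk_L1_Cauchy
      integrable_bounded_measurable[OF bounded_measurable_walk]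
    by (auto simp: real_norm_def)
  \<comment> \<open>Clamping makes \<open>g\<close> bounded also where the limit does not exist.\<close>
  define g where "g x = max (- C) (min C (lim (\<lambda>k. walk (2 * r k) x)))" for x
  have "0 \<le> C"
    using bounded_measurableD(2)[OF bounded_f] abs_ge_zero order_trans by blast
  then have "bounded_measurable M C g"
    using bounded_measurableD(1)[OF bounded_measurable_walk] unfolding bounded_measurable_def g_def
    by (auto intro: borel_measurable_lim_metric)
  moreover have "AE x in M. (\<lambda>k. walk (2 * r k) x) \<longlonglongrightarrow> g x"
    using Cauchy
  proof eventually_elim
    case (elim x)
    then have lim: "(\<lambda>k. walk (2 * r k) x) \<longlonglongrightarrow> lim (\<lambda>k. walk (2 * r k) x)"
      by (simp add: Cauchy_convergent_iff convergent_LIMSEQ_iff)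
    have "\<bar>walk (2 * r k) x\<bar> \<le> C" for k
      by (rule bounded_measurableD(2)[OF bounded_measurable_walk])
    then have "\<bar>lim (\<lambda>k. walk (2 * r k) x)\<bar> \<le> C"
      by (intro LIMSEQ_le_const2[OF tendsto_rabs[OF lim]]) auto
    then show ?case
      using lim by (simp add: g_def abs_le_iff)
  qed
  ultimately show ?thesis
    using r by blast
qed

context
  fixes r :: "nat \<Rightarrow> nat" and g :: "'x \<Rightarrow> real"
  assumes r: "strict_mono r" and g: "bounded_measurable M C g"
    and walk_tendsto: "AE x in M. (\<lambda>k. walk (2 * r k) x) \<longlonglongrightarrow> g x"
begin

lemma integral_limit: "integral\<^sup>L M g = integral\<^sup>L M f"
  using tendsto_integral_bounded_measurable[OF bounded_measurable_walk g walk_tendsto]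
  by (simp add: integral_walk LIMSEQ_const_iff)

lemma sq_norm_lim_eq: "sq_norm_lim = (\<integral>x. f x * g x \<partial>M)"
proof (rule LIMSEQ_unique)
  show "(\<lambda>k. sq_norm (r k)) \<longlonglongrightarrow> sq_norm_lim"
    using LIMSEQ_subseq_LIMSEQ[OF sq_norm_tendsto r] by (simp add: comp_def)
  have "(\<lambda>k. \<integral>x. f x * walk (2 * r k) x \<partial>M) \<longlonglongrightarrow> (\<integral>x. f x * g x \<partial>M)"
  proof (rule tendsto_integral_bounded_measurable)
    show "bounded_measurable M (C * C) (\<lambda>x. f x * walk (2 * r k) x)" for k
      by (rule bounded_measurable_mult[OF bounded_f bounded_measurable_walk])
    show "bounded_measurable M (C * C) (\<lambda>x. f x * g x)"
      by (rule bounded_measurable_mult[OF bounded_f g])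
    show "AE x in M. (\<lambda>k. f x * walk (2 * r k) x) \<longlonglongrightarrow> f x * g x"
      using walk_tendsto by eventually_elim (rule tendsto_mult_left)
  qed
  then show "(\<lambda>k. sq_norm (r k)) \<longlonglongrightarrow> (\<integral>x. f x * g x \<partial>M)"
    using integral_walk_mult_even[of 0 "2 * r _"] by simp
qed

lemma limit_invariant_conv_support:
  assumes s: "s \<in> set_pmf (conv_pmf w w)"
  shows "AE x in M. g (T s x) = g x"
proof -
  txt \<open>
    By the energy identity, \<open>c\<close> times the displacement of \<open>walk (2 * r k)\<close> under \<open>T s\<close> is
    bounded by the decrease \<open>sq_norm (2 * r k) - sq_norm (2 * r k + 1)\<close>, which tends to 0.
  \<close>
  define c where "c = pmf (conv_pmf w w) s"
  have c: "0 < c"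
    using s by (simp add: c_def pmf_positive)
  define Q where "Q k = (\<integral>x. (walk (2 * r k) (T s x) - walk (2 * r k) x)\<^sup>2 \<partial>M)" for k
  have "c * Q k \<le> 2 * sq_norm (2 * r k) - 2 * sq_norm (Suc (2 * r k))" for k
  proof -
    have "bounded_measurable M ((C + C) * (C + C)) (\<lambda>x. (walk n (T s' x) - walk n x)\<^sup>2)" for n s'
      by (intro bounded_measurable_square bounded_measurable_diff bounded_measurable_T
          bounded_measurable_walk)
    then have "(\<integral>x. (walk n (T s' x) - walk n x)\<^sup>2 \<partial>M) \<le> (C + C) * (C + C)" for n s'
      using abs_integral_le_bound abs_le_iff by blast
    then have "c * Q k \<le> measure_pmf.expectation (conv_pmf w w)
        (\<lambda>s'. \<integral>x. (walk (2 * r k) (T s' x) - walk (2 * r k) x)\<^sup>2 \<partial>M)"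
      unfolding c_def Q_def
      by (intro pmf_mult_le_expectation[where C="(C + C) * (C + C)"] integral_nonneg_AE) auto
    then show ?thesis
      by (simp add: expectation_conv_shift_defect[OF bounded_measurable_walk] sq_norm_def)
  qed
  moreover have "(\<lambda>k. c * Q k) \<longlonglongrightarrow> c * (\<integral>x. (g (T s x) - g x)\<^sup>2 \<partial>M)"
    unfolding Q_def
    by (intro tendsto_mult_left
        tendsto_integral_shift_defect[OF bounded_measurable_walk g walk_tendsto])
  moreover have "(\<lambda>k. 2 * sq_norm (2 * r k) - 2 * sq_norm (Suc (2 * r k)))
      \<longlonglongrightarrow> 2 * sq_norm_lim - 2 * sq_norm_lim"
  proof -
    have "strict_mono (\<lambda>k. 2 * r k)" "strict_mono (\<lambda>k. Suc (2 * r k))"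
      using r by (auto simp: strict_mono_def)
    then have "(\<lambda>k. sq_norm (2 * r k)) \<longlonglongrightarrow> sq_norm_lim" "(\<lambda>k. sq_norm (Suc (2 * r k))) \<longlonglongrightarrow> sq_norm_lim"
      using LIMSEQ_subseq_LIMSEQ[OF sq_norm_tendsto] by (auto simp: comp_def)
    then show ?thesis
      by (intro tendsto_diff tendsto_mult_left)
  qed
  ultimately have "c * (\<integral>x. (g (T s x) - g x)\<^sup>2 \<partial>M) \<le> 0"
    by (simp add: LIMSEQ_le)
  moreover have "0 \<le> (\<integral>x. (g (T s x) - g x)\<^sup>2 \<partial>M)"
    by (rule integral_nonneg_AE) auto
  ultimately have "(\<integral>x. (g (T s x) - g x)\<^sup>2 \<partial>M) = 0"
    using c by (simp add: mult_le_0_iff)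
  then show ?thesis
    by (rule AE_eq_if_integral_square_diff_eq_0[OF bounded_measurable_T[OF g] g])
qed

lemma limit_invariant:
  assumes "gen_subgroup (set_pmf (conv_pmf w w)) = UNIV"
  shows "AE x in M. g (T s x) = g x"
  using AE_invariant_gen_subgroup[OF limit_invariant_conv_support] assms by blast

lemma limit_invariant_commuting:
  assumes B: "pmp_system M B" and commute: "\<And>s h x. T s (B h x) = B h (T s x)"
    and f_invariant: "\<And>h. AE x in M. f (B h x) = f x"
  shows "AE x in M. g (B h x) = g x"
proof -
  interpret B: pmp_system M B by (fact B)
  have walk_invariant: "AE x in M. walk n (B h x) = walk n x" for n
    using avg_pow_AE_cong[OF f_invariant[of h], where v=w and n=n]
    by (simp add: avg_pow_commuting commute)
  have "AE x in M. (walk (2 * r k) (B h x) - walk (2 * r k) x)\<^sup>2 = 0" for k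
    using walk_invariant[of "2 * r k"] by eventually_elim simp
  then have "(\<integral>x. (walk (2 * r k) (B h x) - walk (2 * r k) x)\<^sup>2 \<partial>M) = (\<integral>x. 0 \<partial>M)" for k
    using bounded_measurableD(1)[OF bounded_measurable_square[OF bounded_measurable_diff[OF
        B.bounded_measurable_T[OF bounded_measurable_walk] bounded_measurable_walk]]]
    by (intro integral_cong_AE) auto
  then have "(\<integral>x. (g (B h x) - g x)\<^sup>2 \<partial>M) = 0"
    using B.tendsto_integral_shift_defect[OF bounded_measurable_walk g walk_tendsto, of h]
    by (simp add: LIMSEQ_const_iff)
  then show ?thesis
    by (rule AE_eq_if_integral_square_diff_eq_0[OF B.bounded_measurable_T[OF g] g])
qed

end

lemma sq_norm_tendsto_0:
  assumes B: "pmp_system M B" and commute: "\<And>s h x. T s (B h x) = B h (T s x)"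
    and ergodic: "ergodic_pair M T B"
    and generating: "gen_subgroup (set_pmf (conv_pmf w w)) = UNIV"
    and f_invariant: "\<And>h. AE x in M. f (B h x) = f x" and f_mean_0: "integral\<^sup>L M f = 0"
  shows "sq_norm \<longlonglongrightarrow> 0"
proof -
  obtain r g where r: "strict_mono r" and g: "bounded_measurable M C g"
    and lim: "AE x in M. (\<lambda>k. walk (2 * r k) x) \<longlonglongrightarrow> g x"
    using even_walk_AE_convergent_subseq by blast
  have "AE x in M. g x = integral\<^sup>L M g"
    using limit_invariant[OF r g lim generating]
      limit_invariant_commuting[OF r g lim B commute f_invariant]
    by (intro ergodic_AE_eq_integral[OF B ergodic g])
  then have "AE x in M. f x * g x = 0"
    by eventually_elim (simp add: integral_limit[OF r g lim] f_mean_0)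
  then have "(\<integral>x. f x * g x \<partial>M) = (\<integral>x. 0 \<partial>M)"
    using bounded_measurableD(1)[OF bounded_measurable_mult[OF bounded_f g]]
    by (intro integral_cong_AE) auto
  then have "sq_norm_lim = 0"
    by (simp add: sq_norm_lim_eq[OF r g lim])
  then show ?thesis
    using sq_norm_tendsto by simp
qed

end

theorem mainTheorem7:
  fixes w :: "'g::{group_add, countable} pmf"
    and M :: "'x::polish_space measure"
    and A :: "'g \<Rightarrow> 'x \<Rightarrow> 'x"
    and B :: "'h::{group_add, countable} \<Rightarrow> 'x \<Rightarrow> 'x"
    and D :: "'x set" and p :: real
  assumes "absolutely_generating w"
    and "prob_space M" and "sets M = sets borel"
    and "pmp_action M A" and "pmp_action M B"
    and "\<forall>g h. A g \<circ> B h = B h \<circ> A g"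
    and "ergodic_pair M A B"
    and "D \<in> sets M" and "ae_invariant M B D"
    and "1 \<le> p"
  shows "(\<lambda>n. (\<integral>x. \<bar>measure M D - action_op A (conv_pow w n) (indicator D) x\<bar> powr p \<partial>M)
            powr (1 / p)) \<longlonglongrightarrow> 0"
proof -
  interpret prob_space M by (fact assms(2))
  have space: "space M = UNIV"
    using sets_eq_imp_space_eq[OF assms(3)] by simp
  interpret B: pmp_system M B
    using assms(2,5) space by (intro pmp_system.intro pmp_system_axioms.intro)
  note indicator = bounded_measurable_indicator[OF assms(8)]
  note f = bounded_measurable_centered_indicator[OF assms(8)]
  interpret symmetric_walk M A w "\<lambda>x. indicator D x - measure M D" 1
    using assms(1,2,4) space f
    by (intro symmetric_walk.intro symmetric_walk_axioms.intro pmp_system.intro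
        pmp_system_axioms.intro) (auto simp: absolutely_generating_def)
  have "sq_norm \<longlonglongrightarrow> 0"
  proof (rule sq_norm_tendsto_0[OF B.pmp_system_axioms])
    show "A s (B h x) = B h (A s x)" for s h x
      using assms(6) by (metis comp_apply)
    show "AE x in M. indicator D (B h x) - measure M D = indicator D x - measure M D" for h
      using assms(8,9) B.ae_invariant_iff_AE by auto
  qed (use assms integral_centered_indicator in \<open>auto simp: absolutely_generating_def\<close>)
  moreover have "\<bar>measure M D - action_op A (conv_pow w n) (indicator D) x\<bar> = \<bar>walk n x\<bar>" for n x
    using avg_pow_add_const[OF f, where v=w and n=n and c="measure M D" and x=x]
    by (simp add: action_op_eq_avg[OF indicator] avg_conv_pow[OF indicator])
  ultimately show ?thesis
    using Lp_norm_tendsto_0_if_L2[of walk, OF bounded_measurable_walk _ assms(10)]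
    by (simp add: sq_norm_def[abs_def])
qed

end
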